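(* Let $X$ be a Banach space with closed linear subspaces $\lambda,\mu$. Then $\lambda\sim^{sc}\mu$ holds if and only if there are a closed subspace $\lambda_1$ of $\lambda$, a closed subspace $\mu_1$ of $\mu$ and a compact linear operator $K_1\in\mathcal{B}(X)$ such that $\dim\lambda/\lambda_1<+\infty$ and $(I+K_1)\lambda_1=\mu_1$. Moreover, in this case $\lambda_1,\mu_1,K_1$ can be chosen such that $I+K_1\colon X\to X$ and $I+K_1\colon\lambda_1\to\mu_1$ are linear isomorphisms.
   Context: For closed subspaces $\lambda,\mu$ of $X$, $\lambda\sim^{sc}\mu$ means there is a compact $K\in\mathcal{B}(X)$ with $(I+K)\lambda\subset\mu$. *)

theory Defs
  imports "HOL-Analysis.Analysis"
begin

definition closed_subspace :: "'a::real_normed_vector set \<Rightarrow> bool" where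
  "closed_subspace S \<longleftrightarrow> subspace S \<and> closed S"

definition compact_op :: "('a::real_normed_vector \<Rightarrow> 'a) \<Rightarrow> bool" where
  "compact_op K \<longleftrightarrow> bounded_linear K \<and> compact (closure (K ` ball 0 1))"

definition sc_equiv :: "'a::real_normed_vector set \<Rightarrow> 'a set \<Rightarrow> bool" where
  "sc_equiv L M \<longleftrightarrow> (\<exists>K. compact_op K \<and> (\<lambda>x. x + K x) ` L \<subseteq> M)"

text \<open>dim (L / L1) < \<infinity> for a subspace L1 \<subseteq> L: L is spanned by L1 together with
  finitely many vectors of L.\<close>
definition finite_codim_in :: "'a::real_vector set \<Rightarrow> 'a set \<Rightarrow> bool" where
  "finite_codim_in L1 L \<longleftrightarrow> (\<exists>S. finite S \<and> S \<subseteq> L \<and> L \<subseteq> span (L1 \<union> S))"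

definition lin_iso :: "('a::real_normed_vector \<Rightarrow> 'a) \<Rightarrow> bool" where
  "lin_iso T \<longleftrightarrow> bounded_linear T \<and> (\<exists>G. bounded_linear G \<and> G \<circ> T = id \<and> T \<circ> G = id)"

definition lin_iso_between :: "('a::real_normed_vector \<Rightarrow> 'a) \<Rightarrow> 'a set \<Rightarrow> 'a set \<Rightarrow> bool" where
  "lin_iso_between T A B \<longleftrightarrow> linear T \<and> bij_betw T A B \<and> continuous_on A T
     \<and> continuous_on B (inv_into A T)"

end

theory Submission
  imports Defs
begin

text \<open>
  If \<open>(I + K1) L1 \<subseteq> M\<close> and \<open>L \<subseteq> span (L1 \<union> S)\<close> with \<open>S\<close> finite, the vectors of \<open>S\<close>
  are absorbed one at a time: for \<open>s\<close> outside the closed subspace \<open>Y\<close> already treated, a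
  Hahn--Banach functional \<open>f\<close> with \<open>f Y = 0\<close>, \<open>f s = 1\<close> gives the rank-one correction
  \<open>K x - f x (s + K s)\<close>, which agrees with \<open>K\<close> on \<open>Y\<close> and sends \<open>s\<close> to \<open>0 \<in> M\<close>.

  Conversely, let \<open>(I + K) L \<subseteq> M\<close>. By the Riesz lemma, \<open>I + K\<close> cannot shift a strictly
  monotone chain of closed subspaces; hence its kernel is finite-dimensional and, for every
  compact \<open>C\<close>, \<open>I + C\<close> is injective iff it is surjective. Take a basis \<open>E\<close> of the kernel with
  biorthogonal functionals \<open>f b\<close>. Vectors \<open>w b\<close> independent modulo the range of \<open>I + K\<close>
  exist, because otherwise a finite-rank correction of \<open>I + K\<close> would be onto but not
  injective. Then \<open>K1 = K + (\<Sum>b\<in>E. f b (-) w b)\<close> makes \<open>I + K1\<close> injective, hence an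
  isomorphism, and \<open>K1 = K\<close> on \<open>L1 = L \<inter> (\<Inter>b\<in>E. ker (f b))\<close>, which has finite
  codimension in \<open>L\<close>; take \<open>M1 = (I + K1) L1\<close>.
\<close>

section \<open>Hahn--Banach for real normed spaces\<close>

text \<open>A dominated linear functional on a subspace, encoded by its graph in \<open>'a \<times> real\<close>;
  single-valuedness is a consequence of the bound.\<close>

definition dominated_graph :: "real \<Rightarrow> ('a::real_normed_vector \<times> real) set \<Rightarrow> bool" where
  "dominated_graph k G \<longleftrightarrow> subspace G \<and> (\<forall>x a. (x, a) \<in> G \<longrightarrow> a \<le> k * norm x)"

lemma dominated_graph_unique:
  assumes G: "dominated_graph k G" and "(x, a) \<in> G" "(x, b) \<in> G"
  shows "a = b"
proof -
  have "subspace G" and dom: "\<And>x a. (x, a) \<in> G \<Longrightarrow> a \<le> k * norm x"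
    using G unfolding dominated_graph_def by blast+
  have "(0, a - b) \<in> G" "(0, b - a) \<in> G"
    using subspace_diff[OF \<open>subspace G\<close> assms(2,3)] subspace_diff[OF \<open>subspace G\<close> assms(3,2)]
    by simp_all
  then show ?thesis using dom[of 0 "a - b"] dom[of 0 "b - a"] by simp
qed

text \<open>Every \<open>t\<close> between these bounds is an admissible value at \<open>x0\<close> for the extension.\<close>

lemma dominated_graph_extension_value:
  assumes G: "dominated_graph k G" and k: "k \<ge> 0"
  obtains t where "\<And>y a. (y, a) \<in> G \<Longrightarrow> a - k * norm (y - x0) \<le> t"
    and "\<And>z b. (z, b) \<in> G \<Longrightarrow> t \<le> k * norm (z + x0) - b"
proof -
  have sG: "subspace G" and dom: "\<And>x a. (x, a) \<in> G \<Longrightarrow> a \<le> k * norm x"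
    using G unfolding dominated_graph_def by blast+
  have sep: "a - k * norm (y - x0) \<le> k * norm (z + x0) - b" if "(y, a) \<in> G" "(z, b) \<in> G" for y a z b
  proof -
    have "(y, a) + (z, b) \<in> G" using sG that by (rule subspace_add)
    then have "a + b \<le> k * norm (y + z)" using dom by simp
    also have "\<dots> \<le> k * (norm (y - x0) + norm (z + x0))"
      using k norm_triangle_ineq[of "y - x0" "z + x0"] by (simp add: mult_left_mono)
    finally show ?thesis by (simp add: algebra_simps)
  qed
  define S where "S = {a - k * norm (y - x0) | y a. (y, a) \<in> G}"
  have "(0, 0) \<in> G" using sG subspace_0 by (metis zero_prod_def)
  then have "S \<noteq> {}" "bdd_above S"
    unfolding S_def bdd_above_def using sep[of _ _ 0 0] by fastforce+
  then show ?thesis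
    by (intro that[of "Sup S"] cSup_upper cSup_least) (auto simp: S_def sep)
qed

lemma dominated_graph_extension_bound:
  assumes G: "dominated_graph k G" and ya: "(y, a) \<in> G"
    and below: "\<And>y a. (y, a) \<in> G \<Longrightarrow> a - k * norm (y - x0) \<le> t"
    and above: "\<And>z b. (z, b) \<in> G \<Longrightarrow> t \<le> k * norm (z + x0) - b"
  shows "a + c * t \<le> k * norm (y + c *\<^sub>R x0)"
proof -
  have sG: "subspace G" and dom: "a \<le> k * norm y"
    using G ya unfolding dominated_graph_def by blast+
  have scaled: "(r *\<^sub>R y, r * a) \<in> G" for r
    using subspace_scale[OF sG ya, of r] by simp
  consider "c = 0" | "c > 0" | "c < 0" by linarith
  then show ?thesis
  proof cases
    case 1
    then show ?thesis using dom by simp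
  next
    case 2
    have "c * t \<le> c * (k * norm ((1/c) *\<^sub>R y + x0) - (1/c) * a)"
      using above[OF scaled[of "1/c"]] 2 by (intro mult_left_mono) simp_all
    also have "\<dots> = k * (c * norm ((1/c) *\<^sub>R y + x0)) - a"
      using 2 by (simp add: field_simps)
    also have "c * norm ((1/c) *\<^sub>R y + x0) = norm (c *\<^sub>R ((1/c) *\<^sub>R y + x0))"
      using 2 by simp
    also have "c *\<^sub>R ((1/c) *\<^sub>R y + x0) = y + c *\<^sub>R x0"
      using 2 by (simp add: algebra_simps)
    finally show ?thesis by simp
  next
    case 3
    have "(-c) * ((1/-c) * a - k * norm ((1/-c) *\<^sub>R y - x0)) \<le> (-c) * t"
      using below[OF scaled[of "1/-c"]] 3 by (intro mult_left_mono) simp_all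
    also have "(-c) * ((1/-c) * a - k * norm ((1/-c) *\<^sub>R y - x0))
        = a - k * ((-c) * norm ((1/-c) *\<^sub>R y - x0))"
      using 3 by (simp add: field_simps)
    also have "(-c) * norm ((1/-c) *\<^sub>R y - x0) = norm ((-c) *\<^sub>R ((1/-c) *\<^sub>R y - x0))"
      using 3 by simp
    also have "(-c) *\<^sub>R ((1/-c) *\<^sub>R y - x0) = y + c *\<^sub>R x0"
      using 3 by (simp add: algebra_simps)
    finally show ?thesis by simp
  qed
qed

lemma dominated_graph_extend:
  assumes G: "dominated_graph k G" and k: "k \<ge> 0" and x0: "x0 \<notin> fst ` G"
  obtains G' where "dominated_graph k G'" "G \<subset> G'"
proof -
  have sG: "subspace G" using G unfolding dominated_graph_def by blast
  obtain t where below: "\<And>y a. (y, a) \<in> G \<Longrightarrow> a - k * norm (y - x0) \<le> t"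
    and above: "\<And>z b. (z, b) \<in> G \<Longrightarrow> t \<le> k * norm (z + x0) - b"
    using dominated_graph_extension_value[OF G k] by blast
  define G' where "G' = span (insert (x0, t) G)"
  have "a \<le> k * norm x" if xa: "(x, a) \<in> G'" for x a
  proof -
    obtain c where "(x, a) - c *\<^sub>R (x0, t) \<in> span G"
      using xa unfolding G'_def span_insert by blast
    then have "(x - c *\<^sub>R x0, a - c * t) \<in> G" using sG span_eq_iff by fastforce
    from dominated_graph_extension_bound[OF G this below above, of c] show ?thesis by simp
  qed
  then have "dominated_graph k G'" unfolding dominated_graph_def G'_def by simp
  moreover have "G \<subset> G'"
    using x0 span_superset[of "insert (x0, t) G"] unfolding G'_def by force
  ultimately show ?thesis by (rule that)
qed

lemma subspace_Union_chain:
  assumes "C \<noteq> {}" and sub: "\<And>X. X \<in> C \<Longrightarrow> subspace X"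
    and chain: "\<And>X Y. X \<in> C \<Longrightarrow> Y \<in> C \<Longrightarrow> X \<subseteq> Y \<or> Y \<subseteq> X"
  shows "subspace (\<Union>C)"
  unfolding subspace_def
proof (intro conjI ballI allI)
  show "0 \<in> \<Union>C" using assms(1) sub subspace_0 by blast
  show "p + q \<in> \<Union>C" if p: "p \<in> \<Union>C" and q: "q \<in> \<Union>C" for p q
  proof -
    obtain X Y where XY: "X \<in> C" "Y \<in> C" "p \<in> X" "q \<in> Y" using p q by blast
    then have "p \<in> X \<and> q \<in> X \<or> p \<in> Y \<and> q \<in> Y" using chain[OF XY(1,2)] by blast
    then show ?thesis using XY(1,2) sub subspace_add by blast
  qed
  show "c *\<^sub>R p \<in> \<Union>C" if "p \<in> \<Union>C" for c p
    using that sub subspace_scale by blast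
qed

lemma dominated_graph_maximal:
  assumes G0: "dominated_graph k G0" and k: "k \<ge> 0"
  obtains G where "dominated_graph k G" "G0 \<subseteq> G" "fst ` G = UNIV"
proof -
  define A where "A = {G. dominated_graph k G \<and> G0 \<subseteq> G}"
  have "\<exists>U\<in>A. \<forall>X\<in>C. X \<subseteq> U" if C: "C \<in> chains A" for C
  proof (cases "C = {}")
    case True
    then show ?thesis using G0 unfolding A_def by blast
  next
    case False
    have CA: "C \<subseteq> A" and chain: "\<And>X Y. X \<in> C \<Longrightarrow> Y \<in> C \<Longrightarrow> X \<subseteq> Y \<or> Y \<subseteq> X"
      using C unfolding chains_def chain_subset_def by blast+
    have "subspace (\<Union>C)"
      by (rule subspace_Union_chain[OF False _ chain]) (use CA in \<open>auto simp: A_def dominated_graph_def\<close>)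
    then have "dominated_graph k (\<Union>C)" using CA unfolding A_def dominated_graph_def by blast
    then show ?thesis using False CA unfolding A_def by blast
  qed
  then obtain G where GA: "G \<in> A" and max: "\<forall>X\<in>A. G \<subseteq> X \<longrightarrow> X = G"
    using Zorn_Lemma2[of A] by blast
  have "x \<in> fst ` G" for x
  proof (rule ccontr)
    assume "x \<notin> fst ` G"
    moreover have "dominated_graph k G" using GA unfolding A_def by blast
    ultimately obtain G' where "dominated_graph k G'" "G \<subset> G'"
      using dominated_graph_extend k by blast
    then show False using GA max unfolding A_def by blast
  qed
  then show ?thesis using GA that unfolding A_def by blast
qed

theorem hahn_banach_dominated_graph:
  assumes G0: "dominated_graph k G0" and k: "k \<ge> 0"
  obtains f :: "'a::real_normed_vector \<Rightarrow> real"
  where "bounded_linear f" "\<And>x a. (x, a) \<in> G0 \<Longrightarrow> f x = a"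
proof -
  obtain G where G: "dominated_graph k G" and G0G: "G0 \<subseteq> G" and total: "fst ` G = UNIV"
    using dominated_graph_maximal[OF G0 k] .
  have sG: "subspace G" and dom: "\<And>x a. (x, a) \<in> G \<Longrightarrow> a \<le> k * norm x"
    using G unfolding dominated_graph_def by blast+
  define f where "f x = (THE a. (x, a) \<in> G)" for x
  have f_eq: "f x = a" if "(x, a) \<in> G" for x a
    unfolding f_def using that dominated_graph_unique[OF G] by blast
  have f_graph: "(x, f x) \<in> G" for x
  proof -
    obtain a where "(x, a) \<in> G" using total by (metis UNIV_I imageE surjective_pairing)
    then show ?thesis using f_eq by simp
  qed
  have "bounded_linear f"
  proof (rule bounded_linear_intro[where K = k])
    show "f (x + y) = f x + f y" for x y
      using f_eq subspace_add[OF sG f_graph f_graph] by simp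
    show "f (r *\<^sub>R x) = r *\<^sub>R f x" for r x
      using f_eq subspace_scale[OF sG f_graph] by simp
    show "norm (f x) \<le> norm x * k" for x
    proof -
      have "(- x, - f x) \<in> G" using subspace_neg[OF sG f_graph[of x]] by simp
      then show ?thesis using dom[OF f_graph[of x]] dom[of "- x"] by (simp add: abs_le_iff mult.commute)
    qed
  qed
  then show ?thesis using that f_eq G0G by blast
qed

lemma abs_mult_infdist_le_norm:
  fixes Y :: "'a::real_normed_vector set"
  assumes Y: "subspace Y" and y: "y \<in> Y"
  shows "\<bar>c\<bar> * infdist x Y \<le> norm (y + c *\<^sub>R x)"
proof (cases "c = 0")
  case True
  then show ?thesis by simp
next
  case False
  have "infdist x Y \<le> dist x (- (1/c) *\<^sub>R y)"
    using Y y by (intro infdist_le) (simp add: subspace_neg subspace_scale)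
  also have "\<dots> = norm ((1/c) *\<^sub>R (y + c *\<^sub>R x))"
    unfolding dist_norm using False by (simp add: algebra_simps)
  also have "\<dots> = norm (y + c *\<^sub>R x) / \<bar>c\<bar>" by simp
  finally show ?thesis using False by (simp add: field_simps)
qed

lemma hahn_banach_separation:
  fixes Y :: "'a::real_normed_vector set"
  assumes Y: "subspace Y" "closed Y" and x: "x \<notin> Y"
  obtains f :: "'a \<Rightarrow> real" where "bounded_linear f" "\<And>y. y \<in> Y \<Longrightarrow> f y = 0" "f x = 1"
proof -
  define d where "d = infdist x Y"
  have d: "d > 0" using infdist_pos_not_in_closed[OF Y(2) _ x] Y(1) subspace_0 d_def by blast
  define G where "G = span (insert (x, 1) (Y \<times> {0::real}))"
  have YG: "Y \<times> {0} \<subseteq> G" unfolding G_def by (meson span_superset subset_insertI subset_trans)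
  have sY0: "subspace (Y \<times> {0::real})"
    using Y(1) unfolding subspace_def by (auto simp: zero_prod_def)
  have "c \<le> 1/d * norm z" if zc: "(z, c) \<in> G" for z c
  proof -
    obtain c' where "(z, c) - c' *\<^sub>R (x, 1) \<in> span (Y \<times> {0})"
      using zc unfolding G_def span_insert by blast
    moreover have "span (Y \<times> {0::real}) = Y \<times> {0}" using sY0 by simp
    ultimately have "z - c' *\<^sub>R x \<in> Y" "c = c'" by auto
    then obtain y where y: "y \<in> Y" "z = y + c *\<^sub>R x" by (metis diff_add_cancel)
    have "c * d \<le> \<bar>c\<bar> * d" using d by (intro mult_right_mono) auto
    also have "\<dots> \<le> norm z" using abs_mult_infdist_le_norm[OF Y(1) y(1)] y(2) unfolding d_def by simp
    finally show ?thesis using d by (simp add: field_simps)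
  qed
  then have "dominated_graph (1/d) G" unfolding dominated_graph_def G_def by simp
  moreover have "1/d \<ge> 0" using d by simp
  ultimately obtain f where f: "bounded_linear f" "\<And>z c. (z, c) \<in> G \<Longrightarrow> f z = c"
    using hahn_banach_dominated_graph by blast
  moreover have "(x, 1) \<in> G" unfolding G_def by (simp add: span_base)
  ultimately show ?thesis using that YG by blast
qed

lemma closed_span_insert:
  fixes Y :: "'a::real_normed_vector set"
  assumes Y: "subspace Y" "closed Y"
  shows "closed (span (insert b Y))"
proof (cases "b \<in> Y")
  case True
  then have "span (insert b Y) = Y" using Y(1) by (metis insert_absorb span_eq_iff)
  then show ?thesis using Y(2) by simp
next
  case False
  obtain f :: "'a \<Rightarrow> real" where f: "bounded_linear f" "\<And>y. y \<in> Y \<Longrightarrow> f y = 0" "f b = 1"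
    using hahn_banach_separation[OF Y False] by blast
  note lf = bounded_linear.linear[OF f(1)]
  have sY: "span Y = Y" using Y(1) by simp
  have "span (insert b Y) = (\<lambda>x. x - f x *\<^sub>R b) -` Y"
  proof (intro subset_antisym subsetI)
    fix x assume "x \<in> span (insert b Y)"
    then obtain c where c: "x - c *\<^sub>R b \<in> Y" by (auto simp: span_insert sY)
    then have "f x = c" using f(2)[OF c] f(3) by (simp add: linear_diff[OF lf] linear_scale[OF lf])
    then show "x \<in> (\<lambda>x. x - f x *\<^sub>R b) -` Y" using c by simp
  qed (auto simp: span_insert sY)
  moreover have "continuous_on UNIV (\<lambda>x. x - f x *\<^sub>R b)"
    using f(1) by (intro continuous_intros linear_continuous_on) auto
  ultimately show ?thesis
    using Y(2) by (metis closed_vimage continuous_on_eq_continuous_within)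
qed

lemma closed_span_finite:
  fixes B :: "'a::real_normed_vector set"
  assumes "finite B"
  shows "closed (span B)"
  using assms
proof (induction B rule: finite_induct)
  case (insert b B)
  have "span (insert b B) = span (insert b (span B))"
    by (simp only: span_insert span_span)
  then show ?case using closed_span_insert[OF subspace_span insert.IH] by simp
qed simp

section \<open>Compact operators\<close>

lemma compact_op_bounded_linear: "compact_op K \<Longrightarrow> bounded_linear K"
  unfolding compact_op_def by blast

lemma bounded_linear_id_plus_compact: "compact_op C \<Longrightarrow> bounded_linear (\<lambda>x. x + C x)"
  by (intro bounded_linear_add bounded_linear_ident compact_op_bounded_linear)

lemma compact_op_iff_compact_superset:
  "compact_op K \<longleftrightarrow> bounded_linear K \<and> (\<exists>C. compact C \<and> K ` ball 0 1 \<subseteq> C)"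
proof
  assume "compact_op K"
  then show "bounded_linear K \<and> (\<exists>C. compact C \<and> K ` ball 0 1 \<subseteq> C)"
    unfolding compact_op_def using closure_subset[of "K ` ball 0 1"] by blast
next
  assume "bounded_linear K \<and> (\<exists>C. compact C \<and> K ` ball 0 1 \<subseteq> C)"
  then obtain C where K: "bounded_linear K" and C: "compact C" "K ` ball 0 1 \<subseteq> C" by blast
  have "closure (K ` ball 0 1) \<subseteq> C" using closure_minimal[OF C(2) compact_imp_closed[OF C(1)]] .
  then have "C \<inter> closure (K ` ball 0 1) = closure (K ` ball 0 1)" by blast
  moreover have "compact (C \<inter> closure (K ` ball 0 1))" using C(1) by (rule compact_Int_closed) simp
  ultimately show "compact_op K" using K unfolding compact_op_def by simp
qed

lemma compact_op_image_bounded: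
  assumes K: "compact_op K" and B: "bounded B"
  obtains C where "compact C" "K ` B \<subseteq> C"
proof -
  obtain C where lK: "bounded_linear K" and C: "compact C" "K ` ball 0 1 \<subseteq> C"
    using K unfolding compact_op_iff_compact_superset by blast
  obtain r where r: "r > 0" "B \<subseteq> ball 0 r" using B bounded_subset_ballD by blast
  have "K x \<in> (\<lambda>y. r *\<^sub>R y) ` C" if "x \<in> B" for x
  proof -
    have "(1/r) *\<^sub>R x \<in> ball 0 1" using that r by (auto simp: field_simps)
    then have "K ((1/r) *\<^sub>R x) \<in> C" using C(2) by blast
    moreover have "K x = r *\<^sub>R K ((1/r) *\<^sub>R x)"
      using r(1) by (simp add: linear_simps[OF lK])
    ultimately show ?thesis by blast
  qed
  then show ?thesis using that compact_scaling[OF C(1)] by blast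
qed

lemma compact_op_add:
  assumes "compact_op K1" "compact_op K2"
  shows "compact_op (\<lambda>x. K1 x + K2 x)"
proof -
  obtain C1 C2 where C: "compact C1" "K1 ` ball 0 1 \<subseteq> C1" "compact C2" "K2 ` ball 0 1 \<subseteq> C2"
    using assms unfolding compact_op_iff_compact_superset by metis
  have "(\<lambda>x. K1 x + K2 x) ` ball 0 1 \<subseteq> {x + y | x y. x \<in> C1 \<and> y \<in> C2}" using C by blast
  moreover have "bounded_linear (\<lambda>x. K1 x + K2 x)"
    using assms compact_op_bounded_linear bounded_linear_add by blast
  ultimately show ?thesis
    unfolding compact_op_iff_compact_superset using compact_sums[OF C(1,3)] by blast
qed

lemma compact_op_rank_one:
  fixes f :: "'a::real_normed_vector \<Rightarrow> real"
  assumes f: "bounded_linear f"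
  shows "compact_op (\<lambda>x. f x *\<^sub>R w)"
proof -
  obtain k where k: "\<And>x. norm (f x) \<le> norm x * k" "k \<ge> 0"
    using bounded_linear.nonneg_bounded[OF f] by blast
  have "(\<lambda>x. f x *\<^sub>R w) ` ball 0 1 \<subseteq> (\<lambda>t. t *\<^sub>R w) ` {-k..k}"
  proof (intro image_subsetI)
    fix x :: 'a assume "x \<in> ball 0 1"
    then have "norm x \<le> 1" by simp
    then have "norm x * k \<le> k" using k(2) mult_left_le_one_le[of k "norm x"] by (simp add: mult.commute)
    then have "\<bar>f x\<bar> \<le> k" using k(1)[of x] by simp
    then show "f x *\<^sub>R w \<in> (\<lambda>t. t *\<^sub>R w) ` {-k..k}" by (auto simp: abs_le_iff)
  qed
  moreover have "compact ((\<lambda>t. t *\<^sub>R w) ` {-k..k})"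
    by (intro compact_continuous_image continuous_intros) auto
  moreover have "bounded_linear (\<lambda>x. f x *\<^sub>R w)"
    using bounded_linear_compose[OF bounded_linear_scaleR_left f] .
  ultimately show ?thesis unfolding compact_op_iff_compact_superset by blast
qed

lemma compact_op_finite_rank:
  fixes f :: "'i \<Rightarrow> 'a::real_normed_vector \<Rightarrow> real"
  assumes "finite I" "\<And>i. i \<in> I \<Longrightarrow> bounded_linear (f i)"
  shows "compact_op (\<lambda>x. \<Sum>i\<in>I. f i x *\<^sub>R w i)"
  using assms
proof (induction I rule: finite_induct)
  case empty
  show ?case using compact_op_rank_one[of "\<lambda>x. 0" 0] by simp
next
  case (insert i I)
  then show ?case by (simp add: compact_op_add compact_op_rank_one)
qed

lemma compact_op_no_separated_sequence:
  fixes x :: "nat \<Rightarrow> 'a::real_normed_vector"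
  assumes C: "compact_op C" and x: "bounded (range x)" and e: "e > 0"
    and sep: "\<And>m n. n < m \<Longrightarrow> e \<le> norm (C (x m) - C (x n))"
  shows False
proof -
  obtain K where K: "compact K" "C ` range x \<subseteq> K" using compact_op_image_bounded[OF C x] .
  then obtain l and s :: "nat \<Rightarrow> nat" where s: "strict_mono s" "((C \<circ> x) \<circ> s) \<longlonglongrightarrow> l"
    using compact_imp_seq_compact[OF K(1)] unfolding seq_compact_def by (metis comp_apply image_subset_iff rangeI)
  then have "Cauchy (\<lambda>n. C (x (s n)))" using LIMSEQ_imp_Cauchy by (simp add: comp_def)
  then obtain N where N: "\<And>m n. m \<ge> N \<Longrightarrow> n \<ge> N \<Longrightarrow> dist (C (x (s m))) (C (x (s n))) < e"
    using e unfolding Cauchy_def by blast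
  have "e \<le> norm (C (x (s (Suc N))) - C (x (s N)))" using sep strict_monoD[OF s(1)] by blast
  then show False using N[of "Suc N" N] by (simp add: dist_norm)
qed

section \<open>Riesz theory of compact perturbations of the identity\<close>

lemma riesz_lemma:
  fixes Y :: "'a::real_normed_vector set"
  assumes Y: "subspace Y" "closed Y" and V: "subspace V" "Y \<subset> V"
  obtains x where "x \<in> V" "norm x = 1" "\<And>y. y \<in> Y \<Longrightarrow> 1/2 \<le> norm (x - y)"
proof -
  obtain v where v: "v \<in> V" "v \<notin> Y" using V(2) by blast
  have "0 \<in> Y" using Y subspace_0 by blast
  define d where "d = infdist v Y"
  have d: "d > 0" using infdist_pos_not_in_closed[OF Y(2) _ v(2)] \<open>0 \<in> Y\<close> d_def by blast
  have "infdist v Y < 2 * d" using d d_def by simp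
  moreover have "Y \<noteq> {}" using \<open>0 \<in> Y\<close> by blast
  ultimately have "(INF y\<in>Y. dist v y) < 2 * d" using infdist_notempty[of Y v] by simp
  then obtain y0 where y0: "y0 \<in> Y" "dist v y0 < 2 * d"
    using cINF_less_iff[of Y "dist v" "2 * d"] \<open>Y \<noteq> {}\<close> by (auto intro: bdd_belowI[of _ 0])
  define r where "r = norm (v - y0)"
  have r: "d \<le> r" "r < 2 * d"
    using infdist_le[OF y0(1), of v] y0(2) unfolding d_def r_def by (simp_all add: dist_norm)
  have "r > 0" using r d by linarith
  define x where "x = (1/r) *\<^sub>R (v - y0)"
  have "x \<in> V" unfolding x_def using V v y0 by (meson subsetD psubset_imp_subset subspace_diff subspace_scale)
  moreover have "norm x = 1" unfolding x_def r_def using \<open>r > 0\<close> r_def by simp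
  moreover have "1/2 \<le> norm (x - y)" if y: "y \<in> Y" for y
  proof -
    have "y0 + r *\<^sub>R y \<in> Y" using Y y y0 by (simp add: subspace_add subspace_scale)
    then have "d \<le> norm (v - (y0 + r *\<^sub>R y))" using infdist_le[of _ Y v] d_def by (simp add: dist_norm)
    also have "v - (y0 + r *\<^sub>R y) = r *\<^sub>R (x - y)" unfolding x_def using r d by (simp add: algebra_simps)
    finally have "d \<le> r * norm (x - y)" using \<open>r > 0\<close> by simp
    then have "r * 1 < r * (2 * norm (x - y))" using r by linarith
    then show ?thesis using \<open>r > 0\<close> by simp
  qed
  ultimately show ?thesis using that by blast
qed

lemma riesz_sequence:
  fixes Y V :: "nat \<Rightarrow> 'a::real_normed_vector set"
  assumes "\<And>n. subspace (Y n)" "\<And>n. closed (Y n)" "\<And>n. subspace (V n)" "\<And>n. Y n \<subset> V n"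
  obtains x where "\<And>n. x n \<in> V n" "\<And>n. norm (x n) = 1" "\<And>n y. y \<in> Y n \<Longrightarrow> 1/2 \<le> norm (x n - y)"
proof -
  have "\<exists>x. x \<in> V n \<and> norm x = 1 \<and> (\<forall>y\<in>Y n. 1/2 \<le> norm (x - y))" for n
    by (rule riesz_lemma[OF assms]) blast
  then have "\<forall>n. \<exists>x. x \<in> V n \<and> norm x = 1 \<and> (\<forall>y\<in>Y n. 1/2 \<le> norm (x - y))" by blast
  then obtain x where "\<forall>n. x n \<in> V n \<and> norm (x n) = 1 \<and> (\<forall>y\<in>Y n. 1/2 \<le> norm (x n - y))"
    by (rule choice[THEN exE]) blast
  then show ?thesis using that by blast
qed

lemma id_plus_compact_no_strict_ascending_chain:
  assumes C: "compact_op C" and Y: "\<And>n. subspace (Y n)" "\<And>n. closed (Y n)"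
    and strict: "\<And>n. Y n \<subset> Y (Suc n)"
    and shift: "\<And>n x. x \<in> Y (Suc n) \<Longrightarrow> x + C x \<in> Y n"
  shows False
proof -
  obtain x where x: "\<And>n. x n \<in> Y (Suc n)" "\<And>n. norm (x n) = 1"
    "\<And>n y. y \<in> Y n \<Longrightarrow> 1/2 \<le> norm (x n - y)"
    using riesz_sequence[of Y "\<lambda>n. Y (Suc n)", OF Y(1,2) Y(1) strict] by blast
  have mono: "Y n \<subseteq> Y m" if "n \<le> m" for n m
    using lift_Suc_mono_le[of Y, OF psubset_imp_subset[OF strict] that] .
  show False
  proof (rule compact_op_no_separated_sequence[OF C])
    show "bounded (range x)" using x(2) by (auto intro: boundedI[of _ 1])
    show "1/2 \<le> norm (C (x m) - C (x n))" if "n < m" for m n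
    proof -
      have mem: "x m + C (x m) \<in> Y m" "x n + C (x n) \<in> Y m" "x n \<in> Y m"
        using shift[OF x(1)] mono[of "Suc n" m] mono[of n m] x(1)[of n] that by auto
      have "x m + C (x m) - C (x n) = (x m + C (x m)) - (x n + C (x n)) + x n" by simp
      also have "\<dots> \<in> Y m" using subspace_add[OF Y(1) subspace_diff[OF Y(1) mem(1,2)] mem(3)] .
      finally have "1/2 \<le> norm (x m - (x m + C (x m) - C (x n)))" by (rule x(3))
      then show ?thesis by (simp add: norm_minus_commute)
    qed
  qed simp
qed

lemma id_plus_compact_no_strict_descending_chain:
  assumes C: "compact_op C" and Y: "\<And>n. subspace (Y n)" "\<And>n. closed (Y n)"
    and strict: "\<And>n. Y (Suc n) \<subset> Y n"
    and shift: "\<And>n x. x \<in> Y n \<Longrightarrow> x + C x \<in> Y (Suc n)"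
  shows False
proof -
  obtain x where x: "\<And>n. x n \<in> Y n" "\<And>n. norm (x n) = 1"
    "\<And>n y. y \<in> Y (Suc n) \<Longrightarrow> 1/2 \<le> norm (x n - y)"
    using riesz_sequence[of "\<lambda>n. Y (Suc n)" Y, OF Y(1,2) Y(1) strict] by blast
  have mono: "Y m \<subseteq> Y n" if "n \<le> m" for n m
    using lift_Suc_antimono_le[of Y, OF psubset_imp_subset[OF strict] that] .
  show False
  proof (rule compact_op_no_separated_sequence[OF C])
    show "bounded (range x)" using x(2) by (auto intro: boundedI[of _ 1])
    show "1/2 \<le> norm (C (x m) - C (x n))" if "n < m" for m n
    proof -
      have mem: "x n + C (x n) \<in> Y (Suc n)" "x m + C (x m) \<in> Y (Suc n)" "x m \<in> Y (Suc n)"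
        using shift[OF x(1)] mono[of "Suc n" "Suc m"] mono[of "Suc n" m] x(1)[of m] that by auto
      have "x n + C (x n) - C (x m) = (x n + C (x n)) - (x m + C (x m)) + x m" by simp
      also have "\<dots> \<in> Y (Suc n)" using subspace_add[OF Y(1) subspace_diff[OF Y(1) mem(1,2)] mem(3)] .
      finally have "1/2 \<le> norm (x n - (x n + C (x n) - C (x m)))" by (rule x(3))
      then show ?thesis by simp
    qed
  qed simp
qed

lemma id_plus_compact_approx_kernel:
  fixes C :: "'a::real_normed_vector \<Rightarrow> 'a" and u :: "nat \<Rightarrow> 'a"
  assumes C: "compact_op C" and u: "\<And>n. norm (u n) = 1"
    and lim: "(\<lambda>n. u n + C (u n)) \<longlonglongrightarrow> 0"
  obtains x where "x \<noteq> 0" "x + C x = 0"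
proof -
  have lC: "bounded_linear C" using C by (rule compact_op_bounded_linear)
  have "bounded (range u)" using u by (auto intro: boundedI[of _ 1])
  then obtain K where K: "compact K" "C ` range u \<subseteq> K" using compact_op_image_bounded[OF C] by blast
  then obtain l and s :: "nat \<Rightarrow> nat" where s: "strict_mono s" "((C \<circ> u) \<circ> s) \<longlonglongrightarrow> l"
    using compact_imp_seq_compact[OF K(1)] unfolding seq_compact_def by (metis comp_apply image_subset_iff rangeI)
  then have Cus: "(\<lambda>n. C (u (s n))) \<longlonglongrightarrow> l" by (simp add: comp_def)
  have Aus: "(\<lambda>n. u (s n) + C (u (s n))) \<longlonglongrightarrow> 0"
    using LIMSEQ_subseq_LIMSEQ[OF lim s(1)] by (simp add: comp_def)
  have us: "(\<lambda>n. u (s n)) \<longlonglongrightarrow> - l"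
    using tendsto_diff[OF Aus Cus] by simp
  then have "(\<lambda>n. u (s n) + C (u (s n))) \<longlonglongrightarrow> - l + C (- l)"
    by (intro tendsto_add bounded_linear.tendsto[OF lC])
  then have "- l + C (- l) = 0" using Aus LIMSEQ_unique by blast
  moreover have "norm (- l) = 1"
    using tendsto_norm[OF us] u LIMSEQ_unique[of "\<lambda>n. 1" 1] by simp
  ultimately show ?thesis by (intro that[of "- l"]) auto
qed

lemma id_plus_compact_bounded_below:
  fixes C :: "'a::real_normed_vector \<Rightarrow> 'a"
  assumes C: "compact_op C" and inj: "\<And>x. x + C x = 0 \<Longrightarrow> x = 0"
  obtains e where "e > 0" "\<And>x. e * norm x \<le> norm (x + C x)"
proof -
  have lC: "linear C" using compact_op_bounded_linear[OF C] bounded_linear.linear by blast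
  have "\<exists>e>0. \<forall>x. e * norm x \<le> norm (x + C x)"
  proof (rule ccontr)
    assume "\<not> ?thesis"
    then have "\<forall>n. \<exists>x. norm (x + C x) < inverse (real (Suc n)) * norm x"
      by (auto simp: not_le)
    then obtain x where "\<forall>n. norm (x n + C (x n)) < inverse (real (Suc n)) * norm (x n)"
      by (rule choice[THEN exE]) blast
    then have x: "\<And>n. norm (x n + C (x n)) < inverse (real (Suc n)) * norm (x n)" by blast
    have x0: "x n \<noteq> 0" for n using x[of n] linear_0[OF lC] by auto
    define u where "u n = (1 / norm (x n)) *\<^sub>R x n" for n
    have "norm (u n) = 1" for n unfolding u_def using x0 by simp
    moreover have "(\<lambda>n. u n + C (u n)) \<longlonglongrightarrow> 0"
    proof (rule Lim_null_comparison[OF always_eventually LIMSEQ_inverse_real_of_nat], intro allI)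
      fix n
      have "u n + C (u n) = (1 / norm (x n)) *\<^sub>R (x n + C (x n))"
        unfolding u_def by (simp add: linear_scale[OF lC] algebra_simps)
      then show "norm (u n + C (u n)) \<le> inverse (real (Suc n))"
        using x[of n] x0[of n] by (simp add: divide_simps)
    qed
    ultimately obtain y where "y \<noteq> 0" "y + C y = 0" by (rule id_plus_compact_approx_kernel[OF C])
    then show False using inj by blast
  qed
  then show ?thesis using that by blast
qed

lemma closed_range_bounded_below:
  fixes A :: "'a::banach \<Rightarrow> 'b::real_normed_vector"
  assumes "bounded_linear A" "e > 0" "\<And>x. e * norm x \<le> norm (A x)"
  shows "closed (range A)"
proof (rule complete_imp_closed)
  show "complete (range A)"
    using complete_isometric_image[OF assms(2) subspace_UNIV assms(1)] assms(3) complete_UNIV by simp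
qed

lemma bounded_linear_funpow:
  fixes A :: "'a::real_normed_vector \<Rightarrow> 'a"
  shows "bounded_linear A \<Longrightarrow> bounded_linear (A ^^ n)"
proof (induction n)
  case 0
  show ?case using bounded_linear_ident by (simp add: id_def)
next
  case (Suc n)
  then show ?case using bounded_linear_compose[of A "A ^^ n"] by (simp add: comp_def)
qed

lemma bounded_below_funpow:
  fixes A :: "'a::real_normed_vector \<Rightarrow> 'a"
  assumes "e \<ge> 0" "\<And>x. e * norm x \<le> norm (A x)"
  shows "e ^ n * norm x \<le> norm ((A ^^ n) x)"
proof (induction n)
  case (Suc n)
  have "e ^ Suc n * norm x \<le> e * norm ((A ^^ n) x)"
    using mult_left_mono[OF Suc.IH assms(1)] by simp
  also have "\<dots> \<le> norm ((A ^^ Suc n) x)" using assms(2)[of "(A ^^ n) x"] by simp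
  finally show ?case .
qed simp

lemma range_funpow_Suc_psubset:
  fixes A :: "'a \<Rightarrow> 'a"
  assumes inj: "inj A" and not_surj: "\<not> surj A"
  shows "range (A ^^ Suc n) \<subset> range (A ^^ n)"
proof -
  have Suc: "range (A ^^ Suc n) = (A ^^ n) ` range A"
    by (simp add: funpow_Suc_right image_comp del: funpow.simps)
  obtain y where y: "y \<notin> range A" using not_surj by blast
  have "(A ^^ n) y \<notin> range (A ^^ Suc n)"
  proof
    assume "(A ^^ n) y \<in> range (A ^^ Suc n)"
    then obtain z where "(A ^^ n) y = (A ^^ n) (A z)" unfolding Suc by blast
    then have "y = A z" using injD[OF inj_fn[OF inj]] by blast
    then show False using y by blast
  qed
  then show ?thesis unfolding Suc by blast
qed

lemma id_plus_compact_inj_imp_surj: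
  fixes C :: "'a::banach \<Rightarrow> 'a"
  assumes C: "compact_op C" and inj: "\<And>x. x + C x = 0 \<Longrightarrow> x = 0"
  shows "surj (\<lambda>x. x + C x)"
proof (rule ccontr)
  assume not_surj: "\<not> surj (\<lambda>x. x + C x)"
  define A where "A = (\<lambda>x. x + C x)"
  have lA: "bounded_linear A"
    unfolding A_def by (rule bounded_linear_id_plus_compact[OF C])
  have "inj A"
    using inj linear_injective_0[OF bounded_linear.linear[OF lA]] unfolding A_def by blast
  obtain e where e: "e > 0" "\<And>x. e * norm x \<le> norm (A x)"
    using id_plus_compact_bounded_below[OF C inj] unfolding A_def by blast
  show False
  proof (rule id_plus_compact_no_strict_descending_chain[OF C, of "\<lambda>n. range (A ^^ n)"])
    show "subspace (range (A ^^ n))" for n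
      by (rule linear_subspace_image[OF bounded_linear.linear[OF bounded_linear_funpow[OF lA]] subspace_UNIV])
    show "closed (range (A ^^ n))" for n
      using e bounded_below_funpow[of e A n]
      by (intro closed_range_bounded_below[OF bounded_linear_funpow[OF lA], of "e ^ n"]) auto
    have "\<not> surj A" using not_surj unfolding A_def .
    then show "range (A ^^ Suc n) \<subset> range (A ^^ n)" for n
      by (rule range_funpow_Suc_psubset[OF \<open>inj A\<close>])
    show "x + C x \<in> range (A ^^ Suc n)" if x: "x \<in> range (A ^^ n)" for n x
    proof -
      obtain w where "x = (A ^^ n) w" using x by blast
      then have "x + C x = (A ^^ Suc n) w" unfolding A_def by simp
      then show ?thesis by blast
    qed
  qed
qed

lemma id_plus_compact_surj_imp_inj:
  fixes C :: "'a::banach \<Rightarrow> 'a"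
  assumes C: "compact_op C" and surj: "surj (\<lambda>x. x + C x)" and x: "x + C x = 0"
  shows "x = 0"
proof (rule ccontr)
  assume "x \<noteq> 0"
  define A where "A = (\<lambda>x. x + C x)"
  have lA: "bounded_linear A"
    unfolding A_def by (rule bounded_linear_id_plus_compact[OF C])
  note lin_pow = bounded_linear.linear[OF bounded_linear_funpow[OF lA]]
  define Y where "Y n = {z. (A ^^ n) z = 0}" for n
  show False
  proof (rule id_plus_compact_no_strict_ascending_chain[OF C])
    show "subspace (Y n)" for n
      unfolding Y_def by (rule linear_subspace_kernel[OF lin_pow])
    show "closed (Y n)" for n
      unfolding Y_def using bounded_linear_funpow[OF lA]
      by (intro closed_Collect_eq linear_continuous_on continuous_on_const)
    show "Y n \<subset> Y (Suc n)" for n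
    proof
      show "Y n \<subseteq> Y (Suc n)"
        unfolding Y_def using linear_0[OF bounded_linear.linear[OF lA]] by (auto simp: funpow_Suc_right)
      have "surj (A ^^ n)" using surj unfolding A_def by (rule surj_fn)
      then obtain z where "(A ^^ n) z = x" by (metis surjD)
      then have "z \<in> Y (Suc n) - Y n" using x \<open>x \<noteq> 0\<close> unfolding Y_def A_def by simp
      then show "Y n \<noteq> Y (Suc n)" by blast
    qed
    show "z + C z \<in> Y n" if "z \<in> Y (Suc n)" for n z
      using that unfolding Y_def A_def by (simp add: funpow_Suc_right del: funpow.simps)
  qed
qed

lemma id_plus_compact_kernel_finite_basis:
  fixes C :: "'a::real_normed_vector \<Rightarrow> 'a"
  assumes C: "compact_op C"
  obtains E where "finite E" "independent E" "span E = {x. x + C x = 0}"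
proof -
  define N where "N = {x. x + C x = 0}"
  have "linear (\<lambda>x. x + C x)" using bounded_linear_id_plus_compact[OF C] by (rule bounded_linear.linear)
  from linear_subspace_kernel[OF this] have sN: "subspace N" unfolding N_def by simp
  obtain E where E: "E \<subseteq> N" "independent E" "N \<subseteq> span E"
    using maximal_independent_subset[of N] by blast
  have spanE: "span E = N" using E sN span_minimal by blast
  have "finite E"
  proof (rule ccontr)
    assume "infinite E"
    then obtain b :: "nat \<Rightarrow> 'a" where b: "inj b" "range b \<subseteq> E"
      using infinite_countable_subset by blast
    define Y where "Y n = span (b ` {..<n})" for n
    show False
    proof (rule id_plus_compact_no_strict_ascending_chain[OF C])
      show "subspace (Y n)" for n unfolding Y_def by simp
      show "closed (Y n)" for n unfolding Y_def by (simp add: closed_span_finite)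
      show "Y n \<subset> Y (Suc n)" for n
      proof
        show "Y n \<subseteq> Y (Suc n)" unfolding Y_def by (intro span_mono image_mono) auto
        have "b n \<notin> span (E - {b n})" using E(2) b(2) unfolding dependent_def by blast
        moreover have "b ` {..<n} \<subseteq> E - {b n}" using b by (auto dest: injD)
        ultimately have "b n \<notin> Y n" unfolding Y_def using span_mono by blast
        moreover have "b n \<in> Y (Suc n)" unfolding Y_def by (intro span_base) auto
        ultimately show "Y n \<noteq> Y (Suc n)" by blast
      qed
      show "x + C x \<in> Y n" if x: "x \<in> Y (Suc n)" for n x
      proof -
        have "Y (Suc n) \<subseteq> N" unfolding Y_def using b(2) E(1) sN by (intro span_minimal) auto
        then have "x + C x = 0" using x unfolding N_def by blast
        then show ?thesis unfolding Y_def by (simp add: span_zero)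
      qed
    qed
  qed
  then show ?thesis using that E(2) spanE unfolding N_def by blast
qed

lemma id_plus_compact_lin_iso:
  fixes C :: "'a::banach \<Rightarrow> 'a"
  assumes C: "compact_op C" and inj: "\<And>x. x + C x = 0 \<Longrightarrow> x = 0"
  shows "lin_iso (\<lambda>x. x + C x)"
proof -
  define A where "A = (\<lambda>x. x + C x)"
  have lA: "bounded_linear A"
    unfolding A_def by (rule bounded_linear_id_plus_compact[OF C])
  note linA = bounded_linear.linear[OF lA]
  have "surj A" unfolding A_def using id_plus_compact_inj_imp_surj[OF C inj] .
  moreover have "inj A" using inj linear_injective_0[OF linA] unfolding A_def by blast
  ultimately have GA: "inv A (A x) = x" and AG: "A (inv A y) = y" for x y
    by (simp_all add: inv_f_f surj_f_inv_f)
  obtain e where e: "e > 0" "\<And>x. e * norm x \<le> norm (A x)"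
    using id_plus_compact_bounded_below[OF C inj] unfolding A_def by blast
  have "bounded_linear (inv A)"
  proof (rule bounded_linear_intro[where K = "1/e"])
    show "inv A (x + y) = inv A x + inv A y" for x y
      using GA[of "inv A x + inv A y"] by (simp add: linear_add[OF linA] AG)
    show "inv A (r *\<^sub>R x) = r *\<^sub>R inv A x" for r x
      using GA[of "r *\<^sub>R inv A x"] by (simp add: linear_scale[OF linA] AG)
    show "norm (inv A x) \<le> norm x * (1/e)" for x
      using e(2)[of "inv A x"] e(1) by (simp add: AG field_simps)
  qed
  then show ?thesis
    unfolding lin_iso_def A_def[symmetric] using lA GA AG by (auto simp: fun_eq_iff intro!: exI[of _ "inv A"])
qed

section \<open>Biorthogonal functionals and subspaces of finite codimension\<close>

lemma independent_biorthogonal_functionals: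
  fixes E :: "'a::real_normed_vector set"
  assumes E: "finite E" "independent E"
  obtains f :: "'a \<Rightarrow> 'a \<Rightarrow> real" where "\<And>b. b \<in> E \<Longrightarrow> bounded_linear (f b)"
    "\<And>b b'. b \<in> E \<Longrightarrow> b' \<in> E \<Longrightarrow> f b b' = (if b = b' then 1 else 0)"
proof -
  have "\<exists>g :: 'a \<Rightarrow> real. bounded_linear g \<and> (\<forall>b'\<in>E. g b' = (if b = b' then 1 else 0))"
    if b: "b \<in> E" for b
  proof -
    have "b \<notin> span (E - {b})" using E(2) b unfolding dependent_def by blast
    moreover have "closed (span (E - {b}))" using E(1) by (simp add: closed_span_finite)
    ultimately obtain g :: "'a \<Rightarrow> real"
      where g: "bounded_linear g" "\<And>y. y \<in> span (E - {b}) \<Longrightarrow> g y = 0" "g b = 1"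
      using hahn_banach_separation[OF subspace_span] by blast
    have "g b' = 0" if "b' \<in> E" "b' \<noteq> b" for b'
      using g(2) span_base[of b' "E - {b}"] that by blast
    then show ?thesis using g(1,3) by (intro exI[of _ g]) auto
  qed
  then have "\<forall>b\<in>E. \<exists>g :: 'a \<Rightarrow> real. bounded_linear g \<and> (\<forall>b'\<in>E. g b' = (if b = b' then 1 else 0))" by blast
  then obtain f :: "'a \<Rightarrow> 'a \<Rightarrow> real" where "\<forall>b\<in>E. bounded_linear (f b) \<and> (\<forall>b'\<in>E. f b b' = (if b = b' then 1 else 0))"
    by (rule bchoice[THEN exE]) blast
  then show ?thesis using that by blast
qed

lemma span_biorthogonal_expansion:
  fixes E :: "'a::real_vector set"
  assumes E: "finite E" and f: "\<And>b. b \<in> E \<Longrightarrow> linear (f b)"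
    and biorth: "\<And>b b'. b \<in> E \<Longrightarrow> b' \<in> E \<Longrightarrow> f b b' = (if b = b' then 1 else 0)"
    and x: "x \<in> span E"
  shows "x = (\<Sum>b\<in>E. f b x *\<^sub>R b)"
proof -
  obtain u where u: "x = (\<Sum>v\<in>E. u v *\<^sub>R v)" using x span_finite[OF E] by auto
  have coeff: "f b x = u b" if b: "b \<in> E" for b
  proof -
    have "f b x = (\<Sum>v\<in>E. u v * f b v)"
      unfolding u by (simp add: linear_sum[OF f[OF b]] linear_scale[OF f[OF b]] o_def)
    also have "\<dots> = (\<Sum>v\<in>E. if b = v then u v else 0)"
      by (rule sum.cong) (simp_all add: biorth b)
    finally show ?thesis using E b by simp
  qed
  have "(\<Sum>b\<in>E. f b x *\<^sub>R b) = (\<Sum>b\<in>E. u b *\<^sub>R b)" by (rule sum.cong) (simp_all add: coeff)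
  then show ?thesis using u by simp
qed

lemma subspace_common_kernel:
  assumes "\<And>i. i \<in> I \<Longrightarrow> linear (f i)"
  shows "subspace {x. \<forall>i\<in>I. f i x = 0}"
  using assms unfolding subspace_def by (simp add: linear_0 linear_add linear_scale)

lemma closed_subspace_common_kernel:
  fixes f :: "'i \<Rightarrow> 'a::real_normed_vector \<Rightarrow> real"
  assumes f: "\<And>i. i \<in> I \<Longrightarrow> bounded_linear (f i)"
  shows "closed_subspace {x. \<forall>i\<in>I. f i x = 0}"
proof -
  have "closed {x. f i x = 0}" if "i \<in> I" for i
    using f[OF that] by (intro closed_Collect_eq linear_continuous_on continuous_on_const)
  moreover have "{x. \<forall>i\<in>I. f i x = 0} = (\<Inter>i\<in>I. {x. f i x = 0})" by auto
  ultimately have "closed {x. \<forall>i\<in>I. f i x = 0}" by (simp add: closed_INT)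
  moreover have "subspace {x. \<forall>i\<in>I. f i x = 0}"
    by (rule subspace_common_kernel) (rule bounded_linear.linear[OF f])
  ultimately show ?thesis unfolding closed_subspace_def by blast
qed

lemma finite_codim_in_trans:
  assumes "finite_codim_in A B" "finite_codim_in B C" "B \<subseteq> C"
  shows "finite_codim_in A C"
proof -
  obtain S1 where S1: "finite S1" "S1 \<subseteq> B" "B \<subseteq> span (A \<union> S1)"
    using assms(1) unfolding finite_codim_in_def by blast
  obtain S2 where S2: "finite S2" "S2 \<subseteq> C" "C \<subseteq> span (B \<union> S2)"
    using assms(2) unfolding finite_codim_in_def by blast
  have "B \<union> S2 \<subseteq> span (A \<union> (S1 \<union> S2))"
    using S1(3) span_mono[of "A \<union> S1" "A \<union> (S1 \<union> S2)"] span_superset[of "A \<union> (S1 \<union> S2)"] by blast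
  then have "C \<subseteq> span (A \<union> (S1 \<union> S2))" using S2(3) span_minimal[OF _ subspace_span] by blast
  moreover have "S1 \<union> S2 \<subseteq> C" using S1(2) S2(2) assms(3) by blast
  ultimately show ?thesis unfolding finite_codim_in_def using S1(1) S2(1) by blast
qed

lemma finite_codim_in_kernel:
  fixes h :: "'a::real_vector \<Rightarrow> real"
  assumes L: "subspace L" and h: "linear h"
  shows "finite_codim_in (L \<inter> {x. h x = 0}) L"
proof (cases "\<exists>s\<in>L. h s \<noteq> 0")
  case True
  then obtain s where s: "s \<in> L" "h s \<noteq> 0" by blast
  define s0 where "s0 = (1 / h s) *\<^sub>R s"
  have s0: "s0 \<in> L" "h s0 = 1" using s L unfolding s0_def by (auto simp: subspace_scale linear_scale[OF h])
  have "x \<in> span ((L \<inter> {x. h x = 0}) \<union> {s0})" if x: "x \<in> L" for x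
  proof -
    have "x - h x *\<^sub>R s0 \<in> L \<inter> {x. h x = 0}"
      using x s0 L by (simp add: subspace_diff subspace_scale linear_diff[OF h] linear_scale[OF h])
    then have "(x - h x *\<^sub>R s0) + h x *\<^sub>R s0 \<in> span ((L \<inter> {x. h x = 0}) \<union> {s0})"
      by (intro span_add span_scale) (auto intro: span_base)
    then show ?thesis by simp
  qed
  then show ?thesis unfolding finite_codim_in_def using s0(1) by (intro exI[of _ "{s0}"]) auto
next
  case False
  then show ?thesis unfolding finite_codim_in_def by (intro exI[of _ "{}"]) (auto intro: span_base)
qed

lemma finite_codim_in_kernels:
  fixes f :: "'i \<Rightarrow> 'a::real_vector \<Rightarrow> real"
  assumes L: "subspace L" and I: "finite I" and f: "\<And>i. i \<in> I \<Longrightarrow> linear (f i)"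
  shows "finite_codim_in (L \<inter> {x. \<forall>i\<in>I. f i x = 0}) L"
  using I f
proof (induction I rule: finite_induct)
  case empty
  then show ?case unfolding finite_codim_in_def by (intro exI[of _ "{}"]) (auto intro: span_base)
next
  case (insert j I)
  define L' where "L' = L \<inter> {x. \<forall>i\<in>I. f i x = 0}"
  have lin: "linear (f i)" if "i \<in> insert j I" for i using insert.prems that by blast
  have "subspace L'"
    unfolding L'_def using lin by (intro subspace_inter L subspace_common_kernel) auto
  then have "finite_codim_in (L' \<inter> {x. f j x = 0}) L'" using lin by (intro finite_codim_in_kernel) auto
  moreover have "finite_codim_in L' L" unfolding L'_def using insert.IH lin by blast
  ultimately have "finite_codim_in (L' \<inter> {x. f j x = 0}) L"
    by (rule finite_codim_in_trans) (simp add: L'_def)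
  moreover have "L' \<inter> {x. f j x = 0} = L \<inter> {x. \<forall>i\<in>insert j I. f i x = 0}" unfolding L'_def by auto
  ultimately show ?case by simp
qed

section \<open>Extending a compact perturbation over finitely many directions\<close>

lemma compact_perturbation_extend_insert:
  fixes Y M :: "'a::real_normed_vector set"
  assumes Y: "subspace Y" "closed Y" and M: "subspace M"
    and K: "compact_op K" and KYM: "(\<lambda>x. x + K x) ` Y \<subseteq> M"
  obtains K' where "compact_op K'" "(\<lambda>x. x + K' x) ` span (insert s Y) \<subseteq> M"
proof (cases "s \<in> Y")
  case True
  then have "span (insert s Y) = Y" using Y(1) by (metis insert_absorb span_eq_iff)
  then show ?thesis using that K KYM by simp
next
  case False
  obtain f :: "'a \<Rightarrow> real" where f: "bounded_linear f" "\<And>y. y \<in> Y \<Longrightarrow> f y = 0" "f s = 1"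
    using hahn_banach_separation[OF Y False] by blast
  note lf = bounded_linear.linear[OF f(1)]
  note lK = bounded_linear.linear[OF compact_op_bounded_linear[OF K]]
  have sY: "span Y = Y" using Y(1) by simp
  define K' where "K' x = K x + f x *\<^sub>R (- (s + K s))" for x
  have "compact_op K'"
    unfolding K'_def by (intro compact_op_add K compact_op_rank_one f(1))
  moreover have "x + K' x \<in> M" if x: "x \<in> span (insert s Y)" for x
  proof -
    obtain c where y: "x - c *\<^sub>R s \<in> Y" using x by (auto simp: span_insert sY)
    then have "f x = c" using f(2)[OF y] f(3) by (simp add: linear_diff[OF lf] linear_scale[OF lf])
    then have eq: "x + K' x = (x - c *\<^sub>R s) + K (x - c *\<^sub>R s)"
      unfolding K'_def by (simp add: linear_diff[OF lK] linear_scale[OF lK] algebra_simps)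
    have "(x - c *\<^sub>R s) + K (x - c *\<^sub>R s) \<in> M" using KYM y by blast
    then show ?thesis unfolding eq .
  qed
  ultimately show ?thesis using that by blast
qed

lemma compact_perturbation_extend_finite:
  fixes Y M :: "'a::real_normed_vector set"
  assumes "finite S" "subspace Y" "closed Y" "subspace M"
    and "compact_op K" "(\<lambda>x. x + K x) ` Y \<subseteq> M"
  shows "\<exists>K'. compact_op K' \<and> (\<lambda>x. x + K' x) ` span (Y \<union> S) \<subseteq> M"
  using assms
proof (induction S arbitrary: Y K rule: finite_induct)
  case empty
  have "span Y = Y" using empty.prems(1) by simp
  then show ?case unfolding Un_empty_right using empty.prems(4,5) by blast
next
  case (insert s S)
  obtain K' where K': "compact_op K'" "(\<lambda>x. x + K' x) ` span (insert s Y) \<subseteq> M"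
    using compact_perturbation_extend_insert[OF insert.prems] by blast
  have "closed (span (insert s Y))" using closed_span_insert[OF insert.prems(1,2)] .
  with insert.IH[OF subspace_span _ insert.prems(3) K'] obtain K'' where
    K'': "compact_op K''" "(\<lambda>x. x + K'' x) ` span (span (insert s Y) \<union> S) \<subseteq> M" by blast
  moreover have "span (Y \<union> insert s S) \<subseteq> span (span (insert s Y) \<union> S)"
    by (rule span_mono) (auto intro: span_base)
  ultimately show ?case by blast
qed

lemma sc_equiv_if_finite_codim_image:
  fixes L M :: "'a::real_normed_vector set"
  assumes M: "subspace M" and L1: "closed_subspace L1" "finite_codim_in L1 L"
    and K1: "compact_op K1" "(\<lambda>x. x + K1 x) ` L1 \<subseteq> M"
  shows "sc_equiv L M"
proof -
  obtain S where S: "finite S" "L \<subseteq> span (L1 \<union> S)"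
    using L1(2) unfolding finite_codim_in_def by blast
  then obtain K where "compact_op K" "(\<lambda>x. x + K x) ` span (L1 \<union> S) \<subseteq> M"
    using compact_perturbation_extend_finite[OF S(1) _ _ M K1] L1(1) unfolding closed_subspace_def by blast
  then show ?thesis unfolding sc_equiv_def using S(2) by blast
qed

section \<open>Invertible finite-rank corrections\<close>

lemma lin_iso_image_closed_subspace:
  assumes T: "lin_iso T" and L1: "closed_subspace L1"
  shows "closed_subspace (T ` L1)" "lin_iso_between T L1 (T ` L1)"
proof -
  obtain G where G: "bounded_linear G" "G \<circ> T = id" "T \<circ> G = id" and lT: "bounded_linear T"
    using T unfolding lin_iso_def by blast
  have GT: "G (T x) = x" and TG: "T (G y) = y" for x y
    using G(2,3) by (metis comp_apply id_apply)+
  have image: "T ` L1 = G -` L1"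
    using GT TG by (auto intro: image_eqI[of _ T "G _"])
  have "closed (T ` L1)"
    unfolding image using L1 G(1) unfolding closed_subspace_def
    by (intro continuous_closed_vimage linear_continuous_at) auto
  moreover have "subspace (T ` L1)"
    using L1 linear_subspace_image[OF bounded_linear.linear[OF lT]] unfolding closed_subspace_def by blast
  ultimately show "closed_subspace (T ` L1)" unfolding closed_subspace_def by blast
  have inj: "inj_on T L1" using GT by (metis inj_onI)
  have "continuous_on (T ` L1) G" using G(1) by (rule linear_continuous_on)
  moreover have "inv_into L1 T y = G y" if "y \<in> T ` L1" for y
    using that inj GT by auto
  ultimately have "continuous_on (T ` L1) (inv_into L1 T)" using continuous_on_cong by blast
  then show "lin_iso_between T L1 (T ` L1)"
    unfolding lin_iso_between_def using lT inj
    by (auto simp: bounded_linear.linear inj_on_imp_bij_betw linear_continuous_on)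
qed

definition independent_modulo :: "'a::real_vector set \<Rightarrow> ('i \<Rightarrow> 'a) \<Rightarrow> 'i set \<Rightarrow> bool" where
  "independent_modulo R w I \<longleftrightarrow> (\<forall>c. (\<Sum>i\<in>I. c i *\<^sub>R w i) \<in> R \<longrightarrow> (\<forall>i\<in>I. c i = 0))"

lemma independent_modulo_insert:
  assumes R: "subspace R" and I: "finite I" "j \<notin> I" and w: "independent_modulo R w I"
    and v: "\<And>r c. r \<in> R \<Longrightarrow> v \<noteq> r + (\<Sum>i\<in>I. c i *\<^sub>R w i)"
  shows "independent_modulo R (w(j := v)) (insert j I)"
  unfolding independent_modulo_def
proof (intro allI impI)
  fix c assume c: "(\<Sum>i\<in>insert j I. c i *\<^sub>R (w(j := v)) i) \<in> R"
  have "(\<Sum>i\<in>I. c i *\<^sub>R (w(j := v)) i) = (\<Sum>i\<in>I. c i *\<^sub>R w i)" using I(2) by (intro sum.cong) auto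
  then have S: "c j *\<^sub>R v + (\<Sum>i\<in>I. c i *\<^sub>R w i) \<in> R" using c I by simp
  have "c j = 0"
  proof (rule ccontr)
    assume cj: "c j \<noteq> 0"
    have "(1 / c j) *\<^sub>R (c j *\<^sub>R v + (\<Sum>i\<in>I. c i *\<^sub>R w i)) \<in> R" using subspace_scale[OF R S] .
    moreover have "v = (1 / c j) *\<^sub>R (c j *\<^sub>R v + (\<Sum>i\<in>I. c i *\<^sub>R w i)) + (\<Sum>i\<in>I. (- c i / c j) *\<^sub>R w i)"
      using cj by (simp add: scaleR_add_right scaleR_sum_right sum_negf)
    ultimately show False using v[of _ "\<lambda>i. - c i / c j"] by blast
  qed
  then have "(\<Sum>i\<in>I. c i *\<^sub>R w i) \<in> R" using S by simp
  then show "\<forall>i\<in>insert j I. c i = 0" using w \<open>c j = 0\<close> unfolding independent_modulo_def by blast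
qed

lemma linear_finite_rank_correction_range:
  fixes K :: "'a::real_vector \<Rightarrow> 'a" and f :: "'a \<Rightarrow> 'a \<Rightarrow> real"
  assumes K: "linear K" and F: "finite F" and ker: "\<And>b. b \<in> F \<Longrightarrow> b + K b = 0"
    and f: "\<And>b. b \<in> F \<Longrightarrow> linear (f b)"
    and biorth: "\<And>b b'. b \<in> F \<Longrightarrow> b' \<in> F \<Longrightarrow> f b b' = (if b = b' then 1 else 0)"
  shows "z + K z + (\<Sum>b\<in>F. c b *\<^sub>R w b) \<in> range (\<lambda>x. x + (K x + (\<Sum>b\<in>F. f b x *\<^sub>R w b)))"
proof -
  define x where "x = z + (\<Sum>l\<in>F. (c l - f l z) *\<^sub>R l)"
  have "K (\<Sum>l\<in>F. (c l - f l z) *\<^sub>R l) = (\<Sum>l\<in>F. (c l - f l z) *\<^sub>R K l)"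
    by (simp add: linear_sum[OF K] linear_scale[OF K] o_def)
  also have "\<dots> = (\<Sum>l\<in>F. - ((c l - f l z) *\<^sub>R l))"
    using minus_unique[OF ker, symmetric] by (intro sum.cong) auto
  finally have xK: "x + K x = z + K z" unfolding x_def by (simp add: linear_add[OF K] sum_negf)
  have "f b x = c b" if b: "b \<in> F" for b
  proof -
    have "f b x = f b z + (\<Sum>l\<in>F. (c l - f l z) * f b l)"
      unfolding x_def by (simp add: linear_add[OF f[OF b]] linear_sum[OF f[OF b]] linear_scale[OF f[OF b]])
    also have "(\<Sum>l\<in>F. (c l - f l z) * f b l) = (\<Sum>l\<in>F. if b = l then c l - f l z else 0)"
      using biorth[OF b] by (intro sum.cong) auto
    finally show ?thesis using F b by simp
  qed
  then have "(\<Sum>b\<in>F. f b x *\<^sub>R w b) = (\<Sum>b\<in>F. c b *\<^sub>R w b)" by (intro sum.cong) simp_all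
  with xK have "x + (K x + (\<Sum>b\<in>F. f b x *\<^sub>R w b)) = z + K z + (\<Sum>b\<in>F. c b *\<^sub>R w b)"
    by (simp add: add.assoc[symmetric])
  then show ?thesis by (rule range_eqI[OF sym])
qed

text \<open>If the range of \<open>I + K\<close> plus \<open>span (w ` F)\<close> were everything, then
  \<open>I + K + (\<Sum>b\<in>F. f b (-) w b)\<close> would be onto, hence injective, but it kills \<open>j\<close>.\<close>

lemma id_plus_compact_range_plus_span_proper:
  fixes K :: "'a::banach \<Rightarrow> 'a" and f :: "'a \<Rightarrow> 'a \<Rightarrow> real"
  assumes K: "compact_op K" and E: "finite E" and ker: "\<And>b. b \<in> E \<Longrightarrow> b + K b = 0"
    and f: "\<And>b. b \<in> E \<Longrightarrow> bounded_linear (f b)"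
    and biorth: "\<And>b b'. b \<in> E \<Longrightarrow> b' \<in> E \<Longrightarrow> f b b' = (if b = b' then 1 else 0)"
    and F: "F \<subseteq> E" and j: "j \<in> E" "j \<notin> F"
  shows "\<exists>v. \<forall>r\<in>range (\<lambda>x. x + K x). \<forall>c. v \<noteq> r + (\<Sum>b\<in>F. c b *\<^sub>R w b)"
proof (rule ccontr)
  assume "\<nexists>v. \<forall>r\<in>range (\<lambda>x. x + K x). \<forall>c. v \<noteq> r + (\<Sum>b\<in>F. c b *\<^sub>R w b)"
  then have onto: "\<exists>z c. v = z + K z + (\<Sum>b\<in>F. c b *\<^sub>R w b)" for v by blast
  have finF: "finite F" using finite_subset[OF F E] .
  define K1 where "K1 x = K x + (\<Sum>b\<in>F. f b x *\<^sub>R w b)" for x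
  have "compact_op (\<lambda>x. \<Sum>b\<in>F. f b x *\<^sub>R w b)" using F f by (intro compact_op_finite_rank finF) auto
  then have K1: "compact_op K1" unfolding K1_def by (rule compact_op_add[OF K])
  note lK = bounded_linear.linear[OF compact_op_bounded_linear[OF K]]
  have kerF: "\<And>b. b \<in> F \<Longrightarrow> b + K b = 0"
    and biorthF: "\<And>b b'. b \<in> F \<Longrightarrow> b' \<in> F \<Longrightarrow> f b b' = (if b = b' then 1 else 0)"
    using F ker biorth by blast+
  have fF: "linear (f b)" if "b \<in> F" for b using f[OF subsetD[OF F that]] by (rule bounded_linear.linear)
  have "v \<in> range (\<lambda>x. x + K1 x)" for v
  proof -
    obtain z c where "v = z + K z + (\<Sum>b\<in>F. c b *\<^sub>R w b)" using onto by blast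
    moreover have "z + K z + (\<Sum>b\<in>F. c b *\<^sub>R w b) \<in> range (\<lambda>x. x + K1 x)"
      unfolding K1_def by (rule linear_finite_rank_correction_range[OF lK finF kerF fF biorthF])
    ultimately show ?thesis by simp
  qed
  then have "surj (\<lambda>x. x + K1 x)" by blast
  moreover have "f b j = 0" if "b \<in> F" for b using biorth[OF subsetD[OF F that] j(1)] that j(2) by auto
  then have "j + K1 j = 0" using ker[OF j(1)] unfolding K1_def by simp
  ultimately have "j = 0" by (rule id_plus_compact_surj_imp_inj[OF K1])
  moreover have "f j j = 1" "f j 0 = 0"
    using biorth[OF j(1) j(1)] linear_0[OF bounded_linear.linear[OF f[OF j(1)]]] by simp_all
  ultimately show False by simp
qed

lemma id_plus_compact_range_complement:
  fixes K :: "'a::banach \<Rightarrow> 'a" and f :: "'a \<Rightarrow> 'a \<Rightarrow> real"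
  assumes K: "compact_op K" and E: "finite E" and ker: "\<And>b. b \<in> E \<Longrightarrow> b + K b = 0"
    and f: "\<And>b. b \<in> E \<Longrightarrow> bounded_linear (f b)"
    and biorth: "\<And>b b'. b \<in> E \<Longrightarrow> b' \<in> E \<Longrightarrow> f b b' = (if b = b' then 1 else 0)"
  shows "\<exists>w. independent_modulo (range (\<lambda>x. x + K x)) w E"
proof -
  have R: "subspace (range (\<lambda>x. x + K x))"
    by (rule linear_subspace_image[OF bounded_linear.linear[OF bounded_linear_id_plus_compact[OF K]] subspace_UNIV])
  have "\<exists>w. independent_modulo (range (\<lambda>x. x + K x)) w F" if "F \<subseteq> E" for F
    using finite_subset[OF that E] that
  proof (induction F rule: finite_induct)
    case empty
    show ?case unfolding independent_modulo_def by simp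
  next
    case (insert j F)
    have FE: "F \<subseteq> E" "j \<in> E" using insert.prems by simp_all
    obtain w where w: "independent_modulo (range (\<lambda>x. x + K x)) w F" using insert.IH[OF FE(1)] by blast
    obtain v where v: "\<forall>r\<in>range (\<lambda>x. x + K x). \<forall>c. v \<noteq> r + (\<Sum>b\<in>F. c b *\<^sub>R w b)"
      using id_plus_compact_range_plus_span_proper[OF K E ker f biorth FE insert.hyps(2), of w] by blast
    have "independent_modulo (range (\<lambda>x. x + K x)) (w(j := v)) (insert j F)"
      by (rule independent_modulo_insert[OF R insert.hyps w]) (use v in blast)
    then show ?case by blast
  qed
  then show ?thesis by blast
qed

lemma id_plus_compact_corrected_inj:
  fixes K :: "'a::real_normed_vector \<Rightarrow> 'a" and f :: "'a \<Rightarrow> 'a \<Rightarrow> real"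
  assumes E: "finite E" "span E = {x. x + K x = 0}" and f: "\<And>b. b \<in> E \<Longrightarrow> linear (f b)"
    and biorth: "\<And>b b'. b \<in> E \<Longrightarrow> b' \<in> E \<Longrightarrow> f b b' = (if b = b' then 1 else 0)"
    and w: "independent_modulo (range (\<lambda>x. x + K x)) w E"
    and x: "x + (K x + (\<Sum>b\<in>E. f b x *\<^sub>R w b)) = 0"
  shows "x = 0"
proof -
  note w' = w[unfolded independent_modulo_def]
  have "(\<Sum>b\<in>E. f b x *\<^sub>R w b) + (x + K x) = 0" using x by (simp add: algebra_simps)
  then have "- (\<Sum>b\<in>E. f b x *\<^sub>R w b) = x + K x" by (rule minus_unique)
  then have "(\<Sum>b\<in>E. (- f b x) *\<^sub>R w b) = (\<lambda>x. x + K x) x" by (simp add: sum_negf)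
  then have "(\<Sum>b\<in>E. (- f b x) *\<^sub>R w b) \<in> range (\<lambda>x. x + K x)" by (rule range_eqI)
  then have "\<forall>b\<in>E. - f b x = 0" by (rule w'[THEN spec, THEN mp])
  then have fx: "\<forall>b\<in>E. f b x = 0" by simp
  then have "x \<in> span E" using x E(2) by simp
  then have "x = (\<Sum>b\<in>E. f b x *\<^sub>R b)" using span_biorthogonal_expansion[OF E(1) f biorth] by blast
  then show ?thesis using fx by simp
qed

lemma id_plus_compact_invertible_correction:
  fixes K :: "'a::banach \<Rightarrow> 'a"
  assumes K: "compact_op K"
  shows "\<exists>K1 (E :: 'a set) (f :: 'a \<Rightarrow> 'a \<Rightarrow> real). compact_op K1 \<and> lin_iso (\<lambda>x. x + K1 x)
    \<and> finite E \<and> (\<forall>b\<in>E. bounded_linear (f b)) \<and> (\<forall>x. (\<forall>b\<in>E. f b x = 0) \<longrightarrow> K1 x = K x)"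
proof -
  obtain E where E: "finite E" "independent E" "span E = {x. x + K x = 0}"
    using id_plus_compact_kernel_finite_basis[OF K] .
  obtain f :: "'a \<Rightarrow> 'a \<Rightarrow> real" where f: "\<And>b. b \<in> E \<Longrightarrow> bounded_linear (f b)"
    and biorth: "\<And>b b'. b \<in> E \<Longrightarrow> b' \<in> E \<Longrightarrow> f b b' = (if b = b' then 1 else 0)"
    using independent_biorthogonal_functionals[OF E(1,2)] by blast
  have ker: "b + K b = 0" if "b \<in> E" for b using E(3) span_base[OF that] by blast
  obtain w where w: "independent_modulo (range (\<lambda>x. x + K x)) w E"
    using id_plus_compact_range_complement[OF K E(1) ker f biorth] by blast
  define K1 where "K1 x = K x + (\<Sum>b\<in>E. f b x *\<^sub>R w b)" for x
  have "compact_op (\<lambda>x. \<Sum>b\<in>E. f b x *\<^sub>R w b)" by (rule compact_op_finite_rank[OF E(1) f])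
  then have K1: "compact_op K1" unfolding K1_def by (rule compact_op_add[OF K])
  have linf: "linear (f b)" if "b \<in> E" for b using f[OF that] by (rule bounded_linear.linear)
  have "x = 0" if "x + K1 x = 0" for x
    using id_plus_compact_corrected_inj[OF E(1,3) linf biorth w] that unfolding K1_def by blast
  then have iso: "lin_iso (\<lambda>x. x + K1 x)" by (rule id_plus_compact_lin_iso[OF K1])
  have fb: "\<forall>b\<in>E. bounded_linear (f b)" using f by blast
  have agree: "\<forall>x. (\<forall>b\<in>E. f b x = 0) \<longrightarrow> K1 x = K x" unfolding K1_def by simp
  show ?thesis by (intro exI[of _ K1] exI[of _ E] exI[of _ f] conjI K1 iso E(1) fb agree)
qed

lemma sc_equiv_imp_finite_codim_lin_iso:
  fixes L M :: "'a::banach set"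
  assumes L: "closed_subspace L" and sc: "sc_equiv L M"
  shows "\<exists>L1 M1 K1. closed_subspace L1 \<and> L1 \<subseteq> L \<and> closed_subspace M1 \<and> M1 \<subseteq> M
           \<and> compact_op K1 \<and> finite_codim_in L1 L \<and> (\<lambda>x. x + K1 x) ` L1 = M1
           \<and> lin_iso (\<lambda>x. x + K1 x) \<and> lin_iso_between (\<lambda>x. x + K1 x) L1 M1"
proof -
  obtain K where K: "compact_op K" and KLM: "(\<lambda>x. x + K x) ` L \<subseteq> M"
    using sc unfolding sc_equiv_def by blast
  from id_plus_compact_invertible_correction[OF K] obtain K1 E and f :: "'a \<Rightarrow> 'a \<Rightarrow> real"
    where K1: "compact_op K1" "lin_iso (\<lambda>x. x + K1 x)" and f: "finite E" "\<forall>b\<in>E. bounded_linear (f b)"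
      and K1K: "\<forall>x. (\<forall>b\<in>E. f b x = 0) \<longrightarrow> K1 x = K x"
    by blast
  define L1 where "L1 = L \<inter> {x. \<forall>b\<in>E. f b x = 0}"
  have "closed_subspace {x. \<forall>b\<in>E. f b x = 0}" using f(2) by (intro closed_subspace_common_kernel) blast
  then have cL1: "closed_subspace L1"
    using L unfolding L1_def closed_subspace_def by (auto intro: subspace_inter)
  have fc: "finite_codim_in L1 L"
    unfolding L1_def using L f by (intro finite_codim_in_kernels) (auto simp: closed_subspace_def bounded_linear.linear)
  have img: "(\<lambda>x. x + K1 x) ` L1 \<subseteq> M" using KLM K1K unfolding L1_def by auto
  have "L1 \<subseteq> L" unfolding L1_def by blast
  with cL1 fc img K1 lin_iso_image_closed_subspace[OF K1(2) cL1] show ?thesis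
    by (intro exI[of _ L1] exI[of _ "(\<lambda>x. x + K1 x) ` L1"] exI[of _ K1]) simp
qed

theorem proposition3p6:
  fixes L M :: "'a::banach set"
  assumes "closed_subspace L" and "closed_subspace M"
  shows "(sc_equiv L M \<longleftrightarrow>
           (\<exists>L1 M1 K1. closed_subspace L1 \<and> L1 \<subseteq> L \<and> closed_subspace M1 \<and> M1 \<subseteq> M
              \<and> compact_op K1 \<and> finite_codim_in L1 L \<and> (\<lambda>x. x + K1 x) ` L1 = M1))
       \<and> (sc_equiv L M \<longrightarrow>
           (\<exists>L1 M1 K1. closed_subspace L1 \<and> L1 \<subseteq> L \<and> closed_subspace M1 \<and> M1 \<subseteq> M
              \<and> compact_op K1 \<and> finite_codim_in L1 L \<and> (\<lambda>x. x + K1 x) ` L1 = M1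
              \<and> lin_iso (\<lambda>x. x + K1 x) \<and> lin_iso_between (\<lambda>x. x + K1 x) L1 M1))"
proof (intro conjI iffI impI)
  assume "sc_equiv L M"
  then show "\<exists>L1 M1 K1. closed_subspace L1 \<and> L1 \<subseteq> L \<and> closed_subspace M1 \<and> M1 \<subseteq> M
      \<and> compact_op K1 \<and> finite_codim_in L1 L \<and> (\<lambda>x. x + K1 x) ` L1 = M1
      \<and> lin_iso (\<lambda>x. x + K1 x) \<and> lin_iso_between (\<lambda>x. x + K1 x) L1 M1"
    by (rule sc_equiv_imp_finite_codim_lin_iso[OF assms(1)])
  then show "\<exists>L1 M1 K1. closed_subspace L1 \<and> L1 \<subseteq> L \<and> closed_subspace M1 \<and> M1 \<subseteq> M
      \<and> compact_op K1 \<and> finite_codim_in L1 L \<and> (\<lambda>x. x + K1 x) ` L1 = M1"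
    by blast
next
  assume "\<exists>L1 M1 K1. closed_subspace L1 \<and> L1 \<subseteq> L \<and> closed_subspace M1 \<and> M1 \<subseteq> M
      \<and> compact_op K1 \<and> finite_codim_in L1 L \<and> (\<lambda>x. x + K1 x) ` L1 = M1"
  then obtain L1 K1 where L1: "closed_subspace L1" "finite_codim_in L1 L"
    and K1: "compact_op K1" "(\<lambda>x. x + K1 x) ` L1 \<subseteq> M"
    by blast
  have "subspace M" using assms(2) unfolding closed_subspace_def by blast
  then show "sc_equiv L M" using sc_equiv_if_finite_codim_image[OF _ L1 K1] by blast
qed

end
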